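(* Let $\mathfrak{D}\subset(\mathbb{C}\setminus\{0\})^{12}$, with coordinates $(w,w',w'',x,x',x'',y,y',y'',z,z',z'')$, be the variety defined by $1=t(1-t'')$, $1=t'(1-t)$, $1=t''(1-t')$ for each $t\in\{w,x,y,z\}$, together with $1=wxyz$, $1=w'x'y'z'(w'')^2(x'')^2$ and $1=w'x'y'z'(y'')^2(z'')^2$. Let $\overline{\mathfrak{C}}\subset(\mathbb{C}\setminus\{0\})^2\times\mathbb{C}$ be the hypersurface in coordinates $(\bar s,\bar u,d)$ defined by $$0=\bar s\bar u(\bar s-1)(\bar u-1)+d\,(1-\bar s-\bar u+4\bar s\bar u-\bar s^2\bar u-\bar s\bar u^2+\bar s^2\bar u^2)+d^2(2-\bar s-\bar u+2\bar s\bar u)+d^3,$$ and let $\bar e:\overline{\mathfrak{C}}\to(\mathbb{C}\setminus\{0\})^4$ be $\bar e(\bar s,\bar u,d)=(\bar s,t,\bar u,v)$ with $$t=\bar s^{-1}-\bar s^{-1}\bar u+\bar u+d\,(2\bar s^{-1}+\bar s^{-2}\bar u^{-1}-\bar s^{-2})+d^2\bar s^{-2}\bar u^{-1},$$ $$v=\bar u^{-1}-\bar u^{-1}\bar s+\bar s+d\,(2\bar u^{-1}+\bar u^{-2}\bar s^{-1}-\bar u^{-2})+d^2\bar u^{-2}\bar s^{-1}.$$ Let $\overline{\mathfrak{E}}_0$ be the Zariski closure of $\bar e(\overline{\mathfrak{C}})$ in $(\mathbb{C}\setminus\{0\})^4$. Then the map $\Psi:\mathfrak{D}\to\overline{\mathfrak{E}}_0$,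 $$\Psi(w,w',w'',x,x',x'',y,y',y'',z,z',z'')=\Big(\frac{x'z''}{y},\ xy,\ \frac{w'z''}{y},\ wy\Big),$$ is a birational isomorphism.
   Context: $\mathfrak{D}$ is the deformation variety of the standard four-tetrahedron ideal triangulation of the complement $W$ of the right-handed Whitehead link. $\overline{\mathfrak{C}}$ parametrises representations $\mathcal{M}_0\mapsto\begin{pmatrix}\bar s&d\\0&1\end{pmatrix}$, $\mathcal{M}_1\mapsto\begin{pmatrix}\bar u&0\\1&1\end{pmatrix}$ of $\pi_1(W)=\langle\mathcal{M}_0,\mathcal{M}_1\mid \mathcal{M}_1\mathcal{M}_0\mathcal{M}_1\mathcal{M}_0^{-1}\mathcal{M}_1^{-1}\mathcal{M}_0^{-1}\mathcal{M}_1\mathcal{M}_0=\mathcal{M}_0\mathcal{M}_1\mathcal{M}_0^{-1}\mathcal{M}_1^{-1}\mathcal{M}_0^{-1}\mathcal{M}_1\mathcal{M}_0\mathcal{M}_1\rangle$ into $GL_2(\mathbb{C})$ (meridians $\mathcal{M}_0,\mathcal{M}_1$), and $t,v$ are the upper-left entries of the images of the null-homologous longitudes $\mathcal{L}_0^t=\mathcal{M}_0^{-1}\mathcal{M}_1\mathcal{M}_0\mathcal{M}_1^{-1}\mathcal{M}_0^{-1}\mathcal{M}_1^{-1}\mathcal{M}_0\mathcal{M}_1$ and $\mathcal{L}_1^t=\mathcal{M}_1^{-1}\mathcal{M}_0\mathcal{M}_1\mathcal{M}_0^{-1}\mathcal{M}_1^{-1}\mathcal{M}_0^{-1}\mathcal{M}_1\mathcal{M}_0$.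 The variety $\overline{\mathfrak{E}}_0$ is the component of the $PSL_2(\mathbb{C})$-eigenvalue variety of $W$ corresponding to the Dehn surgery component of the character variety, in coordinates (square of meridian eigenvalue, longitude eigenvalue) on each cusp. *)

theory Defs
  imports Complex_Main
begin

inductive poly_fun :: "nat \<Rightarrow> (complex list \<Rightarrow> complex) \<Rightarrow> bool" for n :: nat where
  pf_const: "poly_fun n (\<lambda>_. c)"
| pf_var: "i < n \<Longrightarrow> poly_fun n (\<lambda>x. x ! i)"
| pf_add: "poly_fun n p \<Longrightarrow> poly_fun n q \<Longrightarrow> poly_fun n (\<lambda>x. p x + q x)"
| pf_mult: "poly_fun n p \<Longrightarrow> poly_fun n q \<Longrightarrow> poly_fun n (\<lambda>x. p x * q x)"

definition torus :: "nat \<Rightarrow> complex list set" where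
  "torus n = {x. length x = n \<and> (\<forall>i<n. x ! i \<noteq> 0)}"

definition zero_set :: "nat \<Rightarrow> (complex list \<Rightarrow> complex) set \<Rightarrow> complex list set" where
  "zero_set n P = {x. length x = n \<and> (\<forall>p\<in>P. p x = 0)}"

definition vanishing_polys :: "nat \<Rightarrow> complex list set \<Rightarrow> (complex list \<Rightarrow> complex) set" where
  "vanishing_polys n S = {p. poly_fun n p \<and> (\<forall>x\<in>S. p x = 0)}"

definition zclosure :: "nat \<Rightarrow> complex list set \<Rightarrow> complex list set" where
  "zclosure n S = torus n \<inter> zero_set n (vanishing_polys n S)"

definition zclosed :: "nat \<Rightarrow> complex list set \<Rightarrow> bool" where
  "zclosed n C \<longleftrightarrow> (\<exists>P. (\<forall>p\<in>P. poly_fun n p) \<and> C = torus n \<inter> zero_set n P)"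

definition open_dense_in :: "nat \<Rightarrow> complex list set \<Rightarrow> complex list set \<Rightarrow> bool" where
  "open_dense_in n U X \<longleftrightarrow> (\<exists>C. zclosed n C \<and> U = X - C) \<and> X \<subseteq> zclosure n U"

definition rational_on :: "nat \<Rightarrow> nat \<Rightarrow> complex list set \<Rightarrow> (complex list \<Rightarrow> complex list) \<Rightarrow> bool" where
  "rational_on n m A g \<longleftrightarrow> (\<exists>ps qs. length ps = m \<and> length qs = m \<and>
     (\<forall>i<m. poly_fun n (ps ! i) \<and> poly_fun n (qs ! i) \<and> (\<forall>x\<in>A. (qs ! i) x \<noteq> 0)) \<and>
     (\<forall>x\<in>A. g x = map (\<lambda>i. (ps ! i) x / (qs ! i) x) [0..<m]))"

definition birational_iso :: "nat \<Rightarrow> complex list set \<Rightarrow> nat \<Rightarrow> complex list set \<Rightarrow>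
    (complex list \<Rightarrow> complex list) \<Rightarrow> bool" where
  "birational_iso n X m Y f \<longleftrightarrow> f ` X \<subseteq> Y \<and>
     (\<exists>U V g. open_dense_in n U X \<and> open_dense_in m V Y \<and> bij_betw f U V \<and>
        rational_on n m U f \<and> rational_on m n V g \<and>
        (\<forall>x\<in>U. g (f x) = x) \<and> (\<forall>y\<in>V. f (g y) = y))"

definition shape_eqs :: "complex \<Rightarrow> complex \<Rightarrow> complex \<Rightarrow> bool" where
  "shape_eqs t t' t'' \<longleftrightarrow> 1 = t * (1 - t'') \<and> 1 = t' * (1 - t) \<and> 1 = t'' * (1 - t')"

definition Dvar :: "complex list set" where
  "Dvar = {[w,w',w'',x,x',x'',y,y',y'',z,z',z''] | w w' w'' x x' x'' y y' y'' z z' z''.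
     [w,w',w'',x,x',x'',y,y',y'',z,z',z''] \<in> torus 12 \<and>
     shape_eqs w w' w'' \<and> shape_eqs x x' x'' \<and> shape_eqs y y' y'' \<and> shape_eqs z z' z'' \<and>
     1 = w * x * y * z \<and>
     1 = w' * x' * y' * z' * w''^2 * x''^2 \<and>
     1 = w' * x' * y' * z' * y''^2 * z''^2}"

definition Cbar :: "(complex \<times> complex \<times> complex) set" where
  "Cbar = {(s,u,d). s \<noteq> 0 \<and> u \<noteq> 0 \<and>
     0 = s*u*(s-1)*(u-1)
       + d*(1 - s - u + 4*s*u - s^2*u - s*u^2 + s^2*u^2)
       + d^2*(2 - s - u + 2*s*u) + d^3}"

definition ebar :: "complex \<times> complex \<times> complex \<Rightarrow> complex list" where
  "ebar = (\<lambda>(s,u,d).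
     [s,
      inverse s - inverse s * u + u + d*(2*inverse s + inverse (s^2) * inverse u - inverse (s^2))
        + d^2 * inverse (s^2) * inverse u,
      u,
      inverse u - inverse u * s + s + d*(2*inverse u + inverse (u^2) * inverse s - inverse (u^2))
        + d^2 * inverse (u^2) * inverse s])"

definition E0bar :: "complex list set" where
  "E0bar = zclosure 4 (ebar ` Cbar)"

definition Psi :: "complex list \<Rightarrow> complex list" where
  "Psi p = [p!4 * p!11 / p!6, p!3 * p!6, p!1 * p!11 / p!6, p!0 * p!6]"

end

theory Submission
  imports Defs "HOL-Computational_Algebra.Fundamental_Theorem_Algebra"
begin

text \<open>A point of \<open>Dvar\<close> is determined by its four shapes \<open>w, x, y, z\<close>, and
  \<open>s = x'z''/y\<close>, \<open>u = w'z''/y\<close>, \<open>d = s u (y - 1)\<close> lie on the curve \<open>Cbar\<close> with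
  \<open>ebar (s, u, d) = Psi\<close> of the point. Conversely, for \<open>(s, u, d)\<close> on \<open>Cbar\<close> with
  \<open>s, u \<noteq> 1\<close> the shapes \<open>y = 1 + d/(s u)\<close>, \<open>x = t/y\<close>, \<open>w = v/y\<close>, \<open>z = 1/(w x y)\<close>
  solve the gluing equations. Where \<open>s \<noteq> u\<close> the shape \<open>y\<close> is recovered rationally from
  \<open>(s, t, u, v)\<close> via \<open>s t - u v = (s - u) y\<close>, and eliminating \<open>d\<close> gives three
  polynomials that cut out \<open>E0bar\<close> there, so \<open>Psi\<close> has a rational inverse off
  \<open>(s - u)(s - 1)(u - 1) = 0\<close>. That this locus is nowhere dense follows from the
  continuity of the roots of the cubic defining \<open>Cbar\<close>: every point of \<open>Cbar\<close> is a limit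
  of points with \<open>s \<noteq> u\<close>, \<open>s \<noteq> 1\<close>, \<open>u \<noteq> 1\<close>.\<close>

section \<open>Polynomial and rational functions on affine space\<close>

lemma poly_fun_diff: "poly_fun n p \<Longrightarrow> poly_fun n q \<Longrightarrow> poly_fun n (\<lambda>x. p x - q x)"
  using poly_fun.pf_add[OF _ poly_fun.pf_mult[OF poly_fun.pf_const[of n "-1"]]] by simp

lemma poly_fun_power:
  assumes "poly_fun n p" shows "poly_fun n (\<lambda>x. p x ^ k)"
proof (induction k)
  case 0
  show ?case using poly_fun.pf_const[of n 1] by simp
next
  case (Suc k)
  show ?case using poly_fun.pf_mult[OF assms Suc.IH] by simp
qed

lemmas poly_fun_intros = poly_fun.intros poly_fun_diff poly_fun_power

lemma poly_fun_tendsto: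
  assumes "poly_fun n p" "\<forall>i<n. ((\<lambda>e. f e ! i) \<longlongrightarrow> a ! i) F"
  shows "((\<lambda>e. p (f e)) \<longlongrightarrow> p a) F"
  using assms by (induction rule: poly_fun.induct) (auto intro!: tendsto_intros)

lemma subset_zclosure: "S \<inter> torus n \<subseteq> zclosure n S"
  by (auto simp: zclosure_def zero_set_def vanishing_polys_def torus_def)

lemma zclosure_subset_torus: "zclosure n S \<subseteq> torus n"
  by (simp add: zclosure_def)

lemma vanishing_at_zclosure: "p \<in> vanishing_polys n S \<Longrightarrow> a \<in> zclosure n S \<Longrightarrow> p a = 0"
  by (auto simp: zclosure_def zero_set_def)

lemma zclosure_mono_vanishing:
  "vanishing_polys n T \<subseteq> vanishing_polys n S \<Longrightarrow> zclosure n S \<subseteq> zclosure n T"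
  by (auto simp: zclosure_def zero_set_def)

lemma vanishing_polys_subset_if_limits:
  assumes "F \<noteq> bot"
    and "\<And>a. a \<in> S \<Longrightarrow> \<exists>f. (\<forall>i<n. ((\<lambda>e. f e ! i) \<longlongrightarrow> a ! i) F) \<and> (\<forall>\<^sub>F e in F. f e \<in> T)"
  shows "vanishing_polys n T \<subseteq> vanishing_polys n S"
proof (intro subsetI)
  fix p assume p: "p \<in> vanishing_polys n T"
  have "p a = 0" if "a \<in> S" for a
  proof -
    obtain f where lim: "\<forall>i<n. ((\<lambda>e. f e ! i) \<longlongrightarrow> a ! i) F" and ev: "\<forall>\<^sub>F e in F. f e \<in> T"
      using assms(2)[OF \<open>a \<in> S\<close>] by blast
    have "((\<lambda>e. p (f e)) \<longlongrightarrow> p a) F"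
      using p lim by (intro poly_fun_tendsto) (auto simp: vanishing_polys_def)
    moreover have "((\<lambda>e. p (f e)) \<longlongrightarrow> 0) F"
      using ev p by (intro tendsto_eventually)
        (auto elim!: eventually_mono simp: vanishing_polys_def)
    ultimately show "p a = 0" using tendsto_unique[OF assms(1)] by blast
  qed
  with p show "p \<in> vanishing_polys n S" by (simp add: vanishing_polys_def)
qed

lemma open_dense_in_nonvanishing:
  assumes "poly_fun n h" "X \<subseteq> torus n" "X \<subseteq> zclosure n {x \<in> X. h x \<noteq> 0}"
  shows "open_dense_in n {x \<in> X. h x \<noteq> 0} X"
proof -
  have "zclosed n (torus n \<inter> zero_set n {h})"
    using assms(1) by (auto simp: zclosed_def)
  moreover have "{x \<in> X. h x \<noteq> 0} = X - torus n \<inter> zero_set n {h}"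
    using assms(2) by (auto simp: zero_set_def torus_def)
  ultimately show ?thesis using assms(3) unfolding open_dense_in_def by blast
qed

definition rational_fun :: "nat \<Rightarrow> complex list set \<Rightarrow> (complex list \<Rightarrow> complex) \<Rightarrow> bool" where
  "rational_fun n A f \<longleftrightarrow> (\<exists>p q. poly_fun n p \<and> poly_fun n q \<and> (\<forall>x\<in>A. q x \<noteq> 0 \<and> f x = p x / q x))"

lemma rational_fun_poly: "poly_fun n p \<Longrightarrow> rational_fun n A p"
  unfolding rational_fun_def
  by (rule exI[of _ p], rule exI[of _ "\<lambda>_. 1"]) (auto intro: poly_fun.intros)

lemma rational_fun_const: "rational_fun n A (\<lambda>_. c)"
  by (intro rational_fun_poly poly_fun.intros)

lemma rational_fun_var: "i < n \<Longrightarrow> rational_fun n A (\<lambda>x. x ! i)"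
  by (intro rational_fun_poly poly_fun.intros)

lemma rational_fun_add:
  assumes "rational_fun n A f" "rational_fun n A g"
  shows "rational_fun n A (\<lambda>x. f x + g x)"
proof -
  obtain p q p' q' where "poly_fun n p" "poly_fun n q" "poly_fun n p'" "poly_fun n q'"
    and "\<forall>x\<in>A. q x \<noteq> 0 \<and> f x = p x / q x" "\<forall>x\<in>A. q' x \<noteq> 0 \<and> g x = p' x / q' x"
    using assms unfolding rational_fun_def by blast
  then show ?thesis unfolding rational_fun_def
    by (intro exI[of _ "\<lambda>x. p x * q' x + p' x * q x"] exI[of _ "\<lambda>x. q x * q' x"])
      (auto intro!: poly_fun.intros simp: field_simps)
qed

lemma rational_fun_mult:
  assumes "rational_fun n A f" "rational_fun n A g"
  shows "rational_fun n A (\<lambda>x. f x * g x)"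
proof -
  obtain p q p' q' where "poly_fun n p" "poly_fun n q" "poly_fun n p'" "poly_fun n q'"
    and "\<forall>x\<in>A. q x \<noteq> 0 \<and> f x = p x / q x" "\<forall>x\<in>A. q' x \<noteq> 0 \<and> g x = p' x / q' x"
    using assms unfolding rational_fun_def by blast
  then show ?thesis unfolding rational_fun_def
    by (intro exI[of _ "\<lambda>x. p x * p' x"] exI[of _ "\<lambda>x. q x * q' x"])
      (auto intro!: poly_fun.intros)
qed

lemma rational_fun_divide:
  assumes "rational_fun n A f" "rational_fun n A g" "\<forall>x\<in>A. g x \<noteq> 0"
  shows "rational_fun n A (\<lambda>x. f x / g x)"
proof -
  obtain p q p' q' where "poly_fun n p" "poly_fun n q" "poly_fun n p'" "poly_fun n q'"
    and "\<forall>x\<in>A. q x \<noteq> 0 \<and> f x = p x / q x" "\<forall>x\<in>A. q' x \<noteq> 0 \<and> g x = p' x / q' x"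
    using assms(1,2) unfolding rational_fun_def by blast
  then show ?thesis using assms(3) unfolding rational_fun_def
    by (intro exI[of _ "\<lambda>x. p x * q' x"] exI[of _ "\<lambda>x. q x * p' x"])
      (auto intro!: poly_fun.intros)
qed

lemma rational_fun_diff:
  "rational_fun n A f \<Longrightarrow> rational_fun n A g \<Longrightarrow> rational_fun n A (\<lambda>x. f x - g x)"
  using rational_fun_add[OF _ rational_fun_mult[OF rational_fun_const[of n A "-1"]]] by simp

lemma rational_on_Nil: "rational_on n 0 A (\<lambda>_. [])"
  by (simp add: rational_on_def)

text \<open>The length \<open>k\<close> is an equation premise so that the rule also applies to numerals.\<close>

lemma rational_on_Cons:
  assumes "rational_fun n A f" "rational_on n m A g" "k = Suc m"
  shows "rational_on n k A (\<lambda>x. f x # g x)"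
proof -
  obtain p q where pq: "poly_fun n p" "poly_fun n q" "\<forall>x\<in>A. q x \<noteq> 0 \<and> f x = p x / q x"
    using assms(1) unfolding rational_fun_def by blast
  obtain ps qs where "length ps = m" "length qs = m"
    and "\<forall>i<m. poly_fun n (ps ! i) \<and> poly_fun n (qs ! i) \<and> (\<forall>x\<in>A. (qs ! i) x \<noteq> 0)"
    and "\<forall>x\<in>A. g x = map (\<lambda>i. (ps ! i) x / (qs ! i) x) [0..<m]"
    using assms(2) unfolding rational_on_def by blast
  with pq assms(3) show ?thesis
    unfolding rational_on_def
    by (intro exI[of _ "p # ps"] exI[of _ "q # qs"])
      (auto simp: map_upt_Suc less_Suc_eq_0_disj simp del: upt_Suc)
qed

section \<open>Continuity of roots\<close>

lemma poly_root_near: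
  fixes p :: "complex poly"
  assumes "degree p > 0"
  obtains r where "poly p r = 0" "norm (lead_coeff p) * norm (z - r) ^ degree p \<le> norm (poly p z)"
proof -
  obtain root where p: "smult (lead_coeff p) (\<Prod>i<degree p. [:-root i, 1:]) = p"
    using complex_poly_decompose' by blast
  define dist_root where "dist_root i = norm (z - root i)" for i
  have "Min (dist_root ` {..<degree p}) \<in> dist_root ` {..<degree p}"
    using assms by (intro Min_in) auto
  then obtain i0 where i0: "i0 < degree p" "dist_root i0 = Min (dist_root ` {..<degree p})"
    by auto
  then have i0_min: "dist_root i0 \<le> dist_root i" if "i < degree p" for i
    using that by simp
  have poly_p: "poly p r = lead_coeff p * (\<Prod>i<degree p. r - root i)" for r
    by (subst p[symmetric]) (simp add: poly_prod)
  have "poly p (root i0) = 0"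
    unfolding poly_p using i0(1) by (simp add: prod_zero_iff) blast
  moreover have "norm (poly p z) = norm (lead_coeff p) * (\<Prod>i<degree p. dist_root i)"
    unfolding poly_p dist_root_def by (simp add: norm_mult prod_norm)
  moreover have "dist_root i0 ^ degree p \<le> (\<Prod>i<degree p. dist_root i)"
    using prod_mono[of "{..<degree p}" "\<lambda>_. dist_root i0" dist_root] i0_min
    by (simp add: dist_root_def)
  ultimately show ?thesis
    by (intro that[of "root i0"]) (auto simp: dist_root_def intro: mult_left_mono)
qed

lemma monic_roots_tendsto:
  fixes P :: "'a \<Rightarrow> complex poly"
  assumes "((\<lambda>e. poly (P e) z) \<longlongrightarrow> 0) F"
    and "\<And>e. lead_coeff (P e) = 1" "\<And>e. degree (P e) = n" "n > 0"
  obtains r where "\<And>e. poly (P e) (r e) = 0" "(r \<longlongrightarrow> z) F"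
proof -
  have "\<exists>r. poly (P e) r = 0 \<and> norm (z - r) ^ n \<le> norm (poly (P e) z)" for e
    using poly_root_near[of "P e" z, unfolded assms(2), unfolded assms(3)] assms(4) by force
  then obtain r where r: "\<And>e. poly (P e) (r e) = 0" "\<And>e. norm (z - r e) ^ n \<le> norm (poly (P e) z)"
    by metis
  have bound: "norm (r e - z) \<le> root n (norm (poly (P e) z))" for e
    using real_root_le_mono[OF assms(4) r(2)[of e]] assms(4)
    by (simp add: real_root_power_cancel norm_minus_commute)
  have "((\<lambda>e. root n (norm (poly (P e) z))) \<longlongrightarrow> 0) F"
    using tendsto_real_root[OF tendsto_norm[OF assms(1)], of n] by simp
  then have "((\<lambda>e. r e - z) \<longlongrightarrow> 0) F"
    by (rule tendsto_0_le[where K = 1]) (auto intro!: always_eventually order_trans[OF bound])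
  with r(1) show ?thesis by (intro that) (auto simp: LIM_zero_iff)
qed

section \<open>The deformation variety\<close>

definition shape_point :: "complex \<Rightarrow> complex \<Rightarrow> complex \<Rightarrow> complex \<Rightarrow> complex list" where
  "shape_point w x y z =
     [w, 1/(1-w), (w-1)/w, x, 1/(1-x), (x-1)/x, y, 1/(1-y), (y-1)/y, z, 1/(1-z), (z-1)/z]"

text \<open>The last equation is the first cusp equation of \<open>Dvar\<close> written in the shapes
  \<open>w, x, y, z\<close>; given \<open>w x y z = 1\<close> it is equivalent to the second one.\<close>

definition D_params :: "complex \<Rightarrow> complex \<Rightarrow> complex \<Rightarrow> complex \<Rightarrow> bool" where
  "D_params w x y z \<longleftrightarrow> w \<notin> {0,1} \<and> x \<notin> {0,1} \<and> y \<notin> {0,1} \<and> z \<notin> {0,1} \<and>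
     w*x*y*z = 1 \<and> (1-w)*(1-x) = w^2*x^2*(1-y)*(1-z)"

lemma D_params_swap: "D_params w x y z \<Longrightarrow> D_params x w y z"
  unfolding D_params_def by (auto simp: ac_simps)

lemma shape_eqs_iff: "shape_eqs t t' t'' \<longleftrightarrow> t \<notin> {0,1} \<and> t' = 1/(1-t) \<and> t'' = (t-1)/t"
proof
  assume "shape_eqs t t' t''"
  then have "1 = t*(1-t'')" "1 = t'*(1-t)" by (auto simp: shape_eqs_def)
  moreover from this have "t \<noteq> 0" "t \<noteq> 1" by auto
  ultimately show "t \<notin> {0,1} \<and> t' = 1/(1-t) \<and> t'' = (t-1)/t"
    by (auto simp: field_simps)
qed (auto simp: shape_eqs_def field_simps)

lemma one_eq_square_div_iff: "a \<noteq> 0 \<Longrightarrow> b \<noteq> 0 \<Longrightarrow> 1 = a^2 / (a*b) \<longleftrightarrow> b = a"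
  for a b :: "'a::field"
  by (auto simp: field_simps power2_eq_square)

lemma gluing_eqs_iff:
  fixes w x y z :: complex
  assumes "w \<notin> {0,1}" "x \<notin> {0,1}" "y \<notin> {0,1}" "z \<notin> {0,1}" "w*x*y*z = 1"
  shows "(1 = 1/(1-w) * (1/(1-x)) * (1/(1-y)) * (1/(1-z)) * ((w-1)/w)^2 * ((x-1)/x)^2 \<and>
          1 = 1/(1-w) * (1/(1-x)) * (1/(1-y)) * (1/(1-z)) * ((y-1)/y)^2 * ((z-1)/z)^2) \<longleftrightarrow>
    (1-w)*(1-x) = w^2*x^2*(1-y)*(1-z)"
proof -
  have nz: "1-w \<noteq> 0" "1-x \<noteq> 0" "1-y \<noteq> 0" "1-z \<noteq> 0" "w*x \<noteq> 0" "y*z \<noteq> 0"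
    using assms by auto
  have "1/(1-w) * (1/(1-x)) * (1/(1-y)) * (1/(1-z)) * ((w-1)/w)^2 * ((x-1)/x)^2
      = ((1-w)*(1-x))^2 / (((1-w)*(1-x)) * (w^2*x^2*(1-y)*(1-z)))"
    using nz by (simp add: power_divide divide_simps) algebra
  also have "1 = \<dots> \<longleftrightarrow> w^2*x^2*(1-y)*(1-z) = (1-w)*(1-x)"
    using nz by (intro one_eq_square_div_iff) (auto simp: power_mult_distrib[symmetric])
  finally have first: "1 = 1/(1-w) * (1/(1-x)) * (1/(1-y)) * (1/(1-z)) * ((w-1)/w)^2 * ((x-1)/x)^2
      \<longleftrightarrow> (1-w)*(1-x) = w^2*x^2*(1-y)*(1-z)"
    by auto
  have "1/(1-w) * (1/(1-x)) * (1/(1-y)) * (1/(1-z)) * ((y-1)/y)^2 * ((z-1)/z)^2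
      = ((1-y)*(1-z))^2 / (((1-y)*(1-z)) * (y^2*z^2*(1-w)*(1-x)))"
    using nz by (simp add: power_divide divide_simps) algebra
  also have "1 = \<dots> \<longleftrightarrow> y^2*z^2*(1-w)*(1-x) = (1-y)*(1-z)"
    using nz by (intro one_eq_square_div_iff) (auto simp: power_mult_distrib[symmetric])
  also have "\<dots> \<longleftrightarrow> (1-w)*(1-x) = w^2*x^2*(1-y)*(1-z)"
    using assms(5) nz(5) by (auto simp: power_mult_distrib[symmetric]) algebra+
  finally show ?thesis
    using first by blast
qed

lemma shape_point_in_torus:
  "w \<notin> {0,1} \<Longrightarrow> x \<notin> {0,1} \<Longrightarrow> y \<notin> {0,1} \<Longrightarrow> z \<notin> {0,1} \<Longrightarrow>
    shape_point w x y z \<in> torus 12"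
  by (simp add: shape_point_def torus_def All_less_Suc2 numeral_eq_Suc)

lemma mem_Dvar_iff: "p \<in> Dvar \<longleftrightarrow> (\<exists>w x y z. p = shape_point w x y z \<and> D_params w x y z)"
proof
  assume "p \<in> Dvar"
  then obtain w w' w'' x x' x'' y y' y'' z z' z'' where
    p: "p = [w,w',w'',x,x',x'',y,y',y'',z,z',z'']" and
    shapes: "shape_eqs w w' w''" "shape_eqs x x' x''" "shape_eqs y y' y''" "shape_eqs z z' z''" and
    gluing: "1 = w * x * y * z" "1 = w' * x' * y' * z' * w''^2 * x''^2"
      "1 = w' * x' * y' * z' * y''^2 * z''^2"
    unfolding Dvar_def by blast
  then have "p = shape_point w x y z" "D_params w x y z"
    using gluing_eqs_iff[of w x y z] by (auto simp: shape_eqs_iff shape_point_def D_params_def)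
  then show "\<exists>w x y z. p = shape_point w x y z \<and> D_params w x y z" by blast
next
  assume "\<exists>w x y z. p = shape_point w x y z \<and> D_params w x y z"
  then obtain w x y z where "p = shape_point w x y z" "D_params w x y z" by blast
  then show "p \<in> Dvar"
    using gluing_eqs_iff[of w x y z] shape_point_in_torus[of w x y z]
    unfolding Dvar_def D_params_def by (auto simp: shape_eqs_iff shape_point_def)
qed

lemma shape_point_inject:
  "shape_point w x y z = shape_point w' x' y' z' \<longleftrightarrow> w = w' \<and> x = x' \<and> y = y' \<and> z = z'"
  by (auto simp: shape_point_def)

lemma Psi_shape_point:
  "Psi (shape_point w x y z) = [1/(1-x) * ((z-1)/z) / y, x*y, 1/(1-w) * ((z-1)/z) / y, w*y]"
  by (simp add: Psi_def shape_point_def)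

lemma shape_point_in_Dvar_iff: "shape_point w x y z \<in> Dvar \<longleftrightarrow> D_params w x y z"
  by (auto simp: mem_Dvar_iff shape_point_inject)

lemma Dvar_subset_torus: "Dvar \<subseteq> torus 12"
  unfolding Dvar_def by auto

lemma Psi_in_torus: "p \<in> Dvar \<Longrightarrow> Psi p \<in> torus 4"
  by (auto simp: mem_Dvar_iff D_params_def Psi_shape_point torus_def numeral_eq_Suc All_less_Suc2)

lemma shape_point_tendsto:
  assumes "(W \<longlongrightarrow> w) F" "(X \<longlongrightarrow> x) F" "(Y \<longlongrightarrow> y) F" "(Z \<longlongrightarrow> z) F"
    and "w \<notin> {0,1}" "x \<notin> {0,1}" "y \<notin> {0,1}" "z \<notin> {0,1}"
  shows "\<forall>i<12. ((\<lambda>e. shape_point (W e) (X e) (Y e) (Z e) ! i) \<longlongrightarrow> shape_point w x y z ! i) F"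
  using assms
  by (simp add: shape_point_def numeral_eq_Suc All_less_Suc2) (auto intro!: tendsto_intros)

lemma rational_on_shape_point:
  assumes "rational_fun n A W" "rational_fun n A X" "rational_fun n A Y" "rational_fun n A Z"
    and "\<forall>a\<in>A. W a \<notin> {0,1} \<and> X a \<notin> {0,1} \<and> Y a \<notin> {0,1} \<and> Z a \<notin> {0,1}"
  shows "rational_on n 12 A (\<lambda>a. shape_point (W a) (X a) (Y a) (Z a))"
  unfolding shape_point_def using assms
  by (intro rational_on_Cons rational_on_Nil rational_fun_divide rational_fun_diff
      rational_fun_const) (auto simp: rational_on_Nil)

section \<open>The curve and its map to the deformation variety\<close>

definition C_poly :: "complex \<Rightarrow> complex \<Rightarrow> complex \<Rightarrow> complex" where
  "C_poly s u d = s*u*(s-1)*(u-1) + d*(1 - s - u + 4*s*u - s^2*u - s*u^2 + s^2*u^2)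
     + d^2*(2 - s - u + 2*s*u) + d^3"

lemma mem_Cbar_iff: "(s,u,d) \<in> Cbar \<longleftrightarrow> s \<noteq> 0 \<and> u \<noteq> 0 \<and> C_poly s u d = 0"
  by (auto simp: Cbar_def C_poly_def)

lemma C_poly_commute: "C_poly u s d = C_poly s u d"
  by (simp add: C_poly_def algebra_simps)

definition longitude_num :: "complex \<Rightarrow> complex \<Rightarrow> complex \<Rightarrow> complex" where
  "longitude_num s u d = s*u - s*u^2 + s^2*u^2 + d*(2*s*u + 1 - u) + d^2"

lemma ebar_eq:
  "s \<noteq> 0 \<Longrightarrow> u \<noteq> 0 \<Longrightarrow>
    ebar (s,u,d) = [s, longitude_num s u d / (s^2*u), u, longitude_num u s d / (u^2*s)]"
  by (simp add: ebar_def longitude_num_def field_simps power2_eq_square)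

lemma longitude_num_identities:
  "s*u*(s*u+d)*(s*(s*u+d) - longitude_num s u d)
     - (s^2*u^2*(s*u+d) - longitude_num s u d * longitude_num u s d)
     = (s*u+d) * C_poly s u d"
  "s^2*u^2*(s*u+d) - longitude_num s u d * longitude_num u s d
     - longitude_num s u d * longitude_num u s d * d
     = -(s*u+d)*(s*u+d+1) * C_poly s u d"
  unfolding C_poly_def longitude_num_def by algebra+

lemma curve_relations:
  assumes "(s,u,d) \<in> Cbar"
  defines "Y \<equiv> 1 + d/(s*u)"
    and "t \<equiv> longitude_num s u d / (s^2*u)" and "v \<equiv> longitude_num u s d / (u^2*s)"
  shows "s*Y*(Y-t) = Y - t*v" and "Y - t*v = t*v*d"
proof -
  have s0: "s \<noteq> 0" "u \<noteq> 0" and C: "C_poly s u d = 0" using assms(1) by (auto simp: mem_Cbar_iff)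
  have "s*u + d = Y*(s*u)" "longitude_num s u d = t*(s^2*u)" "longitude_num u s d = v*(u^2*s)"
    using s0 by (simp_all add: Y_def t_def v_def field_simps)
  note subst = longitude_num_identities[of s u d, unfolded C mult_zero_right this]
  have "s^3*u^3*(s*Y*(Y-t) - (Y - t*v)) = 0"
    using subst(1) by algebra
  then show "s*Y*(Y-t) = Y - t*v" using s0 by simp
  have "s^3*u^3*((Y - t*v) - t*v*d) = 0"
    using subst(2) by algebra
  then show "Y - t*v = t*v*d" using s0 by simp
qed

text \<open>Recovers a point of \<open>Dvar\<close> from its shape \<open>y\<close> and the coordinates \<open>t = x y\<close>,
  \<open>v = w y\<close> of its image under \<open>Psi\<close>, using \<open>z = 1/(w x y)\<close>.\<close>

definition lift_shapes :: "complex \<Rightarrow> complex \<Rightarrow> complex \<Rightarrow> complex list" where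
  "lift_shapes y t v = shape_point (v/y) (t/y) y (y/(t*v))"

lemma lift_shapes_in_Dvar:
  assumes rel_s: "s*Y*(Y-t) = Y - t*v" and rel_u: "u*Y*(Y-v) = Y - t*v"
    and rel_d: "Y - t*v = t*v*d" and d: "d = s*u*(Y-1)"
    and "Y \<noteq> 0" "d \<noteq> 0"
  shows "lift_shapes Y t v \<in> Dvar" and "Psi (lift_shapes Y t v) = [s, t, u, v]"
proof -
  have "t*v*d \<noteq> 0"
    using rel_d \<open>Y \<noteq> 0\<close> \<open>d \<noteq> 0\<close> by auto
  then have nz: "t \<noteq> 0" "v \<noteq> 0" "Y \<noteq> 1" "Y \<noteq> t" "Y \<noteq> v" "Y \<noteq> t*v"
    using rel_s rel_u rel_d d by auto
  have "s*u*(Y^2*(Y-v)*(Y-t) - t*v*(1-Y)*(t*v-Y)) = 0"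
    using rel_s rel_u rel_d d by algebra
  then have "Y^2*(Y-v)*(Y-t) = t*v*(1-Y)*(t*v-Y)"
    using \<open>d \<noteq> 0\<close> d by auto
  then have "D_params (v/Y) (t/Y) Y (Y/(t*v))"
    using nz \<open>Y \<noteq> 0\<close> unfolding D_params_def by (simp add: field_simps power2_eq_square) algebra
  then show "lift_shapes Y t v \<in> Dvar"
    by (simp add: lift_shapes_def shape_point_in_Dvar_iff)
  have "1/(1-t/Y) * ((Y/(t*v)-1)/(Y/(t*v))) / Y = (Y - t*v)/(Y*(Y-t))"
    "1/(1-v/Y) * ((Y/(t*v)-1)/(Y/(t*v))) / Y = (Y - t*v)/(Y*(Y-v))"
    using nz \<open>Y \<noteq> 0\<close> by (simp_all add: field_simps)
  moreover have "(Y - t*v)/(Y*(Y-t)) = s" "(Y - t*v)/(Y*(Y-v)) = u"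
    using nz \<open>Y \<noteq> 0\<close> rel_s rel_u by (simp_all add: field_simps)
  ultimately show "Psi (lift_shapes Y t v) = [s, t, u, v]"
    using nz \<open>Y \<noteq> 0\<close> by (simp add: lift_shapes_def Psi_shape_point)
qed

definition curve_to_D :: "complex \<times> complex \<times> complex \<Rightarrow> complex list" where
  "curve_to_D = (\<lambda>(s,u,d). lift_shapes (1 + d/(s*u)) (ebar (s,u,d) ! 1) (ebar (s,u,d) ! 3))"

lemma curve_to_D_in_Dvar:
  assumes C: "(s,u,d) \<in> Cbar" and "s \<noteq> 1" "u \<noteq> 1"
  shows "curve_to_D (s,u,d) \<in> Dvar" and "Psi (curve_to_D (s,u,d)) = ebar (s,u,d)"
proof -
  have s0: "s \<noteq> 0" "u \<noteq> 0" and "C_poly s u d = 0" using C by (auto simp: mem_Cbar_iff)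
  have "C_poly s u 0 \<noteq> 0"
    using s0 \<open>s \<noteq> 1\<close> \<open>u \<noteq> 1\<close> by (simp add: C_poly_def)
  with \<open>C_poly s u d = 0\<close> have "d \<noteq> 0" by metis
  have "C_poly s u (-(s*u)) = - ((s*u)^2)"
    unfolding C_poly_def by algebra
  with \<open>C_poly s u d = 0\<close> s0 have "s*u + d \<noteq> 0"
    by (metis add_eq_0_iff mult_eq_0_iff neg_equal_0_iff_equal zero_eq_power2)
  define Y where "Y = 1 + d/(s*u)"
  define t where "t = longitude_num s u d / (s^2*u)"
  define v where "v = longitude_num u s d / (u^2*s)"
  have C': "(u,s,d) \<in> Cbar" using C by (simp add: mem_Cbar_iff C_poly_commute)
  have "Y \<noteq> 0" "d = s*u*(Y-1)" using s0 \<open>s*u + d \<noteq> 0\<close> by (auto simp: Y_def field_simps)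
  moreover have "s*Y*(Y-t) = Y - t*v" "Y - t*v = t*v*d" "u*Y*(Y-v) = Y - t*v"
    using curve_relations[OF C] curve_relations(1)[OF C']
    by (simp_all add: Y_def t_def v_def mult.commute)
  ultimately have "lift_shapes Y t v \<in> Dvar" "Psi (lift_shapes Y t v) = [s, t, u, v]"
    using lift_shapes_in_Dvar[of s Y t v u d] \<open>d \<noteq> 0\<close> by auto
  moreover have "ebar (s,u,d) = [s, t, u, v]" and "curve_to_D (s,u,d) = lift_shapes Y t v"
    using s0 by (simp_all add: ebar_eq curve_to_D_def Y_def t_def v_def)
  ultimately show "curve_to_D (s,u,d) \<in> Dvar" "Psi (curve_to_D (s,u,d)) = ebar (s,u,d)"
    by simp_all
qed

lemma D_params_curve_eqs:
  assumes "D_params w x y z"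
  defines "s \<equiv> 1/(1-x) * ((z-1)/z) / y" and "u \<equiv> 1/(1-w) * ((z-1)/z) / y"
  shows "C_poly s u (s*u*(y-1)) = 0" and "longitude_num s u (s*u*(y-1)) = s^2*u*(x*y)"
proof -
  have nz: "w \<noteq> 0" "x \<noteq> 0" "y \<noteq> 0" "z \<noteq> 0" "1-w \<noteq> 0" "1-x \<noteq> 0"
    and wxyz: "w*x*y*z = 1" and gluing: "(1-w)*(1-x) = w^2*x^2*(1-y)*(1-z)"
    using assms(1) by (auto simp: D_params_def)
  have "s*(1-x)*y*z = z - 1" "u*(1-w)*y*z = z - 1"
    using nz by (simp_all add: s_def u_def field_simps)
  then have hs: "s*(1-x)*y = 1 - w*x*y" and hu: "u*(1-w)*y = 1 - w*x*y"
    using wxyz by algebra+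
  have hR: "y*(1-w)*(1-x) = w*x*(1-y)*(w*x*y-1)"
    using gluing wxyz nz(4) by algebra
  show "C_poly s u (s*u*(y-1)) = 0"
    unfolding C_poly_def using hs hu hR nz by algebra
  show "longitude_num s u (s*u*(y-1)) = s^2*u*(x*y)"
    unfolding longitude_num_def using hs hu hR nz by algebra
qed

lemma Dvar_in_curve_image:
  assumes "p \<in> Dvar"
  shows "\<exists>s u d. (s,u,d) \<in> Cbar \<and> Psi p = ebar (s,u,d) \<and> curve_to_D (s,u,d) = p"
proof -
  obtain w x y z where p: "p = shape_point w x y z" and D: "D_params w x y z"
    using assms by (auto simp: mem_Dvar_iff)
  define s where "s = 1/(1-x) * ((z-1)/z) / y"
  define u where "u = 1/(1-w) * ((z-1)/z) / y"
  have nz: "w \<notin> {0,1}" "x \<notin> {0,1}" "y \<notin> {0,1}" "z \<notin> {0,1}" and wxyz: "w*x*y*z = 1"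
    using D by (auto simp: D_params_def)
  then have s0: "s \<noteq> 0" "u \<noteq> 0"
    by (auto simp: s_def u_def)
  have C: "C_poly s u (s*u*(y-1)) = 0" and t: "longitude_num s u (s*u*(y-1)) = s^2*u*(x*y)"
    using D_params_curve_eqs[OF D] by (simp_all add: s_def u_def)
  have v: "longitude_num u s (u*s*(y-1)) = u^2*s*(w*y)"
    using D_params_curve_eqs(2)[OF D_params_swap[OF D]] by (simp add: s_def u_def)
  have ebar: "ebar (s, u, s*u*(y-1)) = [s, x*y, u, w*y]"
    using s0 t v by (simp add: ebar_eq mult.commute[of u s])
  have "z = y/(x*y*(w*y))"
    using wxyz nz by (simp add: field_simps)
  then have "curve_to_D (s, u, s*u*(y-1)) = p"
    using s0 nz by (simp add: curve_to_D_def ebar lift_shapes_def p)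
  moreover have "Psi p = ebar (s, u, s*u*(y-1))"
    unfolding ebar by (simp add: p Psi_shape_point s_def u_def)
  ultimately show ?thesis
    using C s0 by (auto simp: mem_Cbar_iff)
qed

lemma ebar_tendsto:
  assumes "(S \<longlongrightarrow> s) F" "(U \<longlongrightarrow> u) F" "(D \<longlongrightarrow> d) F" "s \<noteq> 0" "u \<noteq> 0"
  shows "\<forall>i<4. ((\<lambda>e. ebar (S e, U e, D e) ! i) \<longlongrightarrow> ebar (s,u,d) ! i) F"
  using assms by (simp add: ebar_def numeral_eq_Suc All_less_Suc2) (auto intro!: tendsto_intros)

lemma curve_to_D_tendsto:
  assumes "(S \<longlongrightarrow> s) F" "(U \<longlongrightarrow> u) F" "(D \<longlongrightarrow> d) F" "(s,u,d) \<in> Cbar"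
    and "curve_to_D (s,u,d) \<in> Dvar"
  shows "\<forall>i<12. ((\<lambda>e. curve_to_D (S e, U e, D e) ! i) \<longlongrightarrow> curve_to_D (s,u,d) ! i) F"
proof -
  define Y where "Y = 1 + d/(s*u)"
  define t where "t = ebar (s,u,d) ! 1"
  define v where "v = ebar (s,u,d) ! 3"
  have s0: "s \<noteq> 0" "u \<noteq> 0" using assms(4) by (auto simp: mem_Cbar_iff)
  have "D_params (v/Y) (t/Y) Y (Y/(t*v))"
    using assms(5)
    by (simp add: curve_to_D_def lift_shapes_def shape_point_in_Dvar_iff Y_def t_def v_def)
  then have nz: "Y \<noteq> 0" "t \<noteq> 0" "v \<noteq> 0"
    and params: "v/Y \<notin> {0,1}" "t/Y \<notin> {0,1}" "Y \<notin> {0,1}" "Y/(t*v) \<notin> {0,1}"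
    by (auto simp: D_params_def)
  have "((\<lambda>e. 1 + D e/(S e * U e)) \<longlongrightarrow> Y) F"
    using assms(1-3) s0 by (auto simp: Y_def intro!: tendsto_intros)
  moreover have "((\<lambda>e. ebar (S e, U e, D e) ! 1) \<longlongrightarrow> t) F" "((\<lambda>e. ebar (S e, U e, D e) ! 3) \<longlongrightarrow> v) F"
    using ebar_tendsto[OF assms(1-3) s0] by (simp_all add: t_def v_def)
  ultimately show ?thesis
    unfolding curve_to_D_def lift_shapes_def prod.case
      Y_def[symmetric] t_def[symmetric] v_def[symmetric]
    using nz params by (intro shape_point_tendsto) (auto intro!: tendsto_intros)
qed

section \<open>The inverse of Psi and equations for the eigenvalue variety\<close>

lemma ebar_linear_relation:
  assumes "s \<noteq> 0" "u \<noteq> 0"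
  shows "s * (ebar (s,u,d) ! 1) - u * (ebar (s,u,d) ! 3) = (s - u) * (1 + d/(s*u))"
proof -
  have "longitude_num s u d - longitude_num u s d = (s - u) * (s*u + d)"
    unfolding longitude_num_def by algebra
  then show ?thesis
    using assms by (simp add: ebar_eq field_simps power2_eq_square)
qed

definition Psi_inv :: "complex list \<Rightarrow> complex list" where
  "Psi_inv q = lift_shapes ((q!0*q!1 - q!2*q!3) / (q!0 - q!2)) (q!1) (q!3)"

lemma Psi_inv_ebar:
  assumes "s \<noteq> 0" "u \<noteq> 0" "s \<noteq> u"
  shows "Psi_inv (ebar (s,u,d)) = curve_to_D (s,u,d)"
proof -
  have "(s * (ebar (s,u,d) ! 1) - u * (ebar (s,u,d) ! 3)) / (s - u) = 1 + d/(s*u)"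
    using ebar_linear_relation[OF assms(1,2)] assms(3) by simp
  then show ?thesis
    using assms(1,2) by (simp add: Psi_inv_def curve_to_D_def ebar_eq)
qed

definition d_num :: "complex \<Rightarrow> complex \<Rightarrow> complex \<Rightarrow> complex \<Rightarrow> complex" where
  "d_num s t u v = s*u*(s*t - u*v - s + u)"

text \<open>\<open>E_longitude\<close> and \<open>E_cubic\<close> are the equations \<open>s\<^sup>2 u t = longitude_num s u d\<close> and
  \<open>C_poly s u d = 0\<close> with \<open>d\<close> eliminated through \<open>d (s - u) = d_num s t u v\<close>, multiplied
  by a power of \<open>s - u\<close>.\<close>

definition E_longitude :: "complex \<Rightarrow> complex \<Rightarrow> complex \<Rightarrow> complex \<Rightarrow> complex" where
  "E_longitude s t u v = (s-u)^2*(s^2*u*t) - ((s-u)^2*(s*u - s*u^2 + s^2*u^2)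
     + d_num s t u v*(s-u)*(2*s*u + 1 - u) + (d_num s t u v)^2)"

definition E_cubic :: "complex \<Rightarrow> complex \<Rightarrow> complex \<Rightarrow> complex \<Rightarrow> complex" where
  "E_cubic s t u v = (s-u)^3*(s*u*(s-1)*(u-1))
     + d_num s t u v*(s-u)^2*(1 - s - u + 4*s*u - s^2*u - s*u^2 + s^2*u^2)
     + (d_num s t u v)^2*(s-u)*(2 - s - u + 2*s*u) + (d_num s t u v)^3"

definition E_polys :: "(complex list \<Rightarrow> complex) set" where
  "E_polys = {\<lambda>q. E_longitude (q!0) (q!1) (q!2) (q!3), \<lambda>q. E_longitude (q!2) (q!3) (q!0) (q!1),
     \<lambda>q. E_cubic (q!0) (q!1) (q!2) (q!3)}"

lemma E_polys_homogenize:
  assumes "d*(s-u) = d_num s t u v"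
  shows "E_longitude s t u v = (s-u)^2*(s^2*u*t - longitude_num s u d)"
    and "E_longitude u v s t = (u-s)^2*(u^2*s*v - longitude_num u s d)"
    and "E_cubic s t u v = (s-u)^3 * C_poly s u d"
proof -
  have swapped: "d_num u v s t = d*(u-s)"
    using assms unfolding d_num_def by algebra
  show "E_longitude s t u v = (s-u)^2*(s^2*u*t - longitude_num s u d)"
    unfolding E_longitude_def longitude_num_def assms[symmetric] by algebra
  show "E_longitude u v s t = (u-s)^2*(u^2*s*v - longitude_num u s d)"
    unfolding E_longitude_def longitude_num_def swapped by algebra
  show "E_cubic s t u v = (s-u)^3 * C_poly s u d"
    unfolding E_cubic_def C_poly_def assms[symmetric] by algebra
qed

lemma poly_fun_E_polys: "P \<in> E_polys \<Longrightarrow> poly_fun 4 P"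
  unfolding E_polys_def E_longitude_def E_cubic_def d_num_def
  by (auto intro!: poly_fun_intros)

lemma E_polys_vanish_on_curve_image: "E_polys \<subseteq> vanishing_polys 4 (ebar ` Cbar)"
proof
  fix P assume P: "P \<in> E_polys"
  have "P (ebar (s,u,d)) = 0" if "(s,u,d) \<in> Cbar" for s u d
  proof -
    have s0: "s \<noteq> 0" "u \<noteq> 0" and "C_poly s u d = 0" using that by (auto simp: mem_Cbar_iff)
    define t where "t = longitude_num s u d / (s^2*u)"
    define v where "v = longitude_num u s d / (u^2*s)"
    have q: "ebar (s,u,d) = [s, t, u, v]" using s0 by (simp add: ebar_eq t_def v_def)
    have "s*t - u*v = (s - u) * (1 + d/(s*u))"
      using ebar_linear_relation[OF s0, of d] by (simp add: q)
    then have "d*(s-u) = d_num s t u v"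
      using s0 by (simp add: d_num_def field_simps)
    note E = E_polys_homogenize[OF this]
    have "s^2*u*t = longitude_num s u d" "u^2*s*v = longitude_num u s d"
      using s0 by (simp_all add: t_def v_def)
    then show ?thesis
      using P \<open>C_poly s u d = 0\<close> by (auto simp: E_polys_def q E)
  qed
  then show "P \<in> vanishing_polys 4 (ebar ` Cbar)"
    using poly_fun_E_polys[OF P] by (auto simp: vanishing_polys_def)
qed

lemma E0bar_in_curve_image:
  assumes q: "q \<in> E0bar" and su: "q!0 \<noteq> q!2"
  shows "\<exists>d. (q!0, q!2, d) \<in> Cbar \<and> q = ebar (q!0, q!2, d)"
proof -
  have "q \<in> torus 4"
    using q zclosure_subset_torus unfolding E0bar_def by blast
  then have "length q = Suc (Suc (Suc (Suc 0)))" and nz: "q!0 \<noteq> 0" "q!2 \<noteq> 0"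
    by (simp_all add: torus_def)
  moreover from this(1) obtain s t u v where q_eq: "q = [s, t, u, v]"
    by (auto simp: length_Suc_conv)
  ultimately have s0: "s \<noteq> 0" "u \<noteq> 0"
    by simp_all
  have "\<forall>P\<in>E_polys. P q = 0"
    using E_polys_vanish_on_curve_image q unfolding E0bar_def
    by (blast intro: vanishing_at_zclosure)
  then have E: "E_longitude s t u v = 0" "E_longitude u v s t = 0" "E_cubic s t u v = 0"
    by (simp_all add: E_polys_def q_eq)
  define d where "d = d_num s t u v / (s - u)"
  have "s \<noteq> u" using su by (simp add: q_eq)
  then have "d*(s-u) = d_num s t u v" by (simp add: d_def)
  note E' = E[unfolded E_polys_homogenize[OF this]]
  have "C_poly s u d = 0" "t = longitude_num s u d / (s^2*u)" "v = longitude_num u s d / (u^2*s)"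
    using E' \<open>s \<noteq> u\<close> s0 by (simp_all add: field_simps)
  then show ?thesis
    using s0 by (intro exI[of _ d]) (simp add: q_eq mem_Cbar_iff ebar_eq)
qed

section \<open>Density and birationality\<close>

lemma C_poly_eq_poly:
  "C_poly s u d = poly [:s*u*(s-1)*(u-1), 1 - s - u + 4*s*u - s^2*u - s*u^2 + s^2*u^2,
     2 - s - u + 2*s*u, 1:] d"
  unfolding C_poly_def by (simp add: algebra_simps power2_eq_square power3_eq_cube)

lemma Cbar_approx:
  assumes "(s,u,d) \<in> Cbar"
  obtains S U D where "(S \<longlongrightarrow> s) (at 0)" "(U \<longlongrightarrow> u) (at 0)" "(D \<longlongrightarrow> d) (at 0)"
    "\<forall>\<^sub>F e in at (0::complex). (S e, U e, D e) \<in> Cbar \<and> S e \<noteq> U e \<and> S e \<noteq> 1 \<and> U e \<noteq> 1"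
proof -
  \<comment> \<open>different speeds separate \<open>S e\<close> from \<open>U e\<close> even when \<open>s = u\<close>\<close>
  define S where "S e = s + e" for e :: complex
  define U where "U e = u + 2*e" for e :: complex
  have s0: "s \<noteq> 0" "u \<noteq> 0" and "C_poly s u d = 0" using assms by (auto simp: mem_Cbar_iff)
  have S: "(S \<longlongrightarrow> s) (at 0)" and U: "(U \<longlongrightarrow> u) (at 0)"
    unfolding S_def U_def by (auto intro!: tendsto_eq_intros)
  define P where "P e = [:S e * U e * (S e - 1) * (U e - 1),
    1 - S e - U e + 4 * S e * U e - S e ^ 2 * U e - S e * U e ^ 2 + S e ^ 2 * U e ^ 2,
    2 - S e - U e + 2 * S e * U e, 1:]" for e
  have poly_P: "poly (P e) x = C_poly (S e) (U e) x" for e x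
    by (simp add: P_def C_poly_eq_poly)
  have "((\<lambda>e. C_poly (S e) (U e) d) \<longlongrightarrow> C_poly s u d) (at 0)"
    unfolding C_poly_def using S U by (auto intro!: tendsto_intros)
  then have "((\<lambda>e. poly (P e) d) \<longlongrightarrow> 0) (at 0)"
    using \<open>C_poly s u d = 0\<close> by (simp add: poly_P)
  moreover have "lead_coeff (P e) = 1" "degree (P e) = 3" for e
    by (simp_all add: P_def)
  ultimately obtain D where "\<And>e. poly (P e) (D e) = 0" "(D \<longlongrightarrow> d) (at 0)"
    using monic_roots_tendsto[where n = 3] by (metis zero_less_numeral)
  then have D: "\<And>e. C_poly (S e) (U e) (D e) = 0" "(D \<longlongrightarrow> d) (at 0)"
    by (simp_all add: poly_P)
  have "\<forall>\<^sub>F e in at (0::complex). e \<noteq> -s \<and> e \<noteq> -u/2 \<and> e \<noteq> s - u \<and> e \<noteq> 1 - s \<and> e \<noteq> (1 - u)/2"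
    by (intro eventually_conj eventually_neq_at_within)
  then have "\<forall>\<^sub>F e in at (0::complex). (S e, U e, D e) \<in> Cbar \<and> S e \<noteq> U e \<and> S e \<noteq> 1 \<and> U e \<noteq> 1"
    by eventually_elim
      (simp add: mem_Cbar_iff D(1), auto simp: S_def U_def add_eq_0_iff field_simps)
  with S U D(2) show ?thesis by (rule that)
qed

definition exceptional_E :: "complex list \<Rightarrow> complex" where
  "exceptional_E q = (q!0 - q!2) * (q!0 - 1) * (q!2 - 1)"

definition exceptional_D :: "complex list \<Rightarrow> complex" where
  "exceptional_D p = (p!4*p!11 - p!1*p!11) * (p!4*p!11 - p!6) * (p!1*p!11 - p!6)"

lemma poly_fun_exceptional_E: "poly_fun 4 exceptional_E"
  unfolding exceptional_E_def by (intro poly_fun_intros) simp_all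

lemma poly_fun_exceptional_D: "poly_fun 12 exceptional_D"
  unfolding exceptional_D_def by (intro poly_fun_intros) simp_all

lemma exceptional_D_eq: "p!6 \<noteq> 0 \<Longrightarrow> exceptional_D p = (p!6)^3 * exceptional_E (Psi p)"
  by (simp add: exceptional_D_def exceptional_E_def Psi_def field_simps power3_eq_cube)

lemma exceptional_E_ebar: "exceptional_E (ebar (s,u,d)) = (s - u) * (s - 1) * (u - 1)"
  by (simp add: exceptional_E_def ebar_def)

lemma Psi_Dvar_subset: "Psi ` Dvar \<subseteq> E0bar"
proof
  fix q assume "q \<in> Psi ` Dvar"
  then obtain p where p: "p \<in> Dvar" "q = Psi p" by blast
  then have "q \<in> ebar ` Cbar \<inter> torus 4"
    using Dvar_in_curve_image[OF p(1)] Psi_in_torus[OF p(1)] by auto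
  then show "q \<in> E0bar"
    using subset_zclosure unfolding E0bar_def by blast
qed

lemma generic_curve_point:
  assumes "(s,u,d) \<in> Cbar" "s \<noteq> u" "s \<noteq> 1" "u \<noteq> 1"
  shows "curve_to_D (s,u,d) \<in> {p \<in> Dvar. exceptional_D p \<noteq> 0}"
    and "ebar (s,u,d) \<in> {q \<in> E0bar. exceptional_E q \<noteq> 0}"
proof -
  have D: "curve_to_D (s,u,d) \<in> Dvar" and Psi: "Psi (curve_to_D (s,u,d)) = ebar (s,u,d)"
    using curve_to_D_in_Dvar[OF assms(1,3,4)] by simp_all
  have E: "exceptional_E (ebar (s,u,d)) \<noteq> 0"
    using assms(2-4) by (simp add: exceptional_E_ebar)
  have "curve_to_D (s,u,d) ! 6 \<noteq> 0"
    using D Dvar_subset_torus by (auto simp: torus_def)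
  then show "curve_to_D (s,u,d) \<in> {p \<in> Dvar. exceptional_D p \<noteq> 0}"
    using D E by (simp add: exceptional_D_eq Psi)
  show "ebar (s,u,d) \<in> {q \<in> E0bar. exceptional_E q \<noteq> 0}"
    using Psi_Dvar_subset D E by (auto simp flip: Psi)
qed

lemma Psi_image_generic:
  "Psi ` {p \<in> Dvar. exceptional_D p \<noteq> 0} \<subseteq> {q \<in> E0bar. exceptional_E q \<noteq> 0}"
  using Psi_Dvar_subset Dvar_subset_torus by (auto simp: exceptional_D_eq torus_def)

lemma Dvar_dense: "Dvar \<subseteq> zclosure 12 {p \<in> Dvar. exceptional_D p \<noteq> 0}"
proof -
  have "vanishing_polys 12 {p \<in> Dvar. exceptional_D p \<noteq> 0} \<subseteq> vanishing_polys 12 Dvar"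
  proof (rule vanishing_polys_subset_if_limits[OF at_neq_bot])
    fix p assume "p \<in> Dvar"
    then obtain s u d where C: "(s,u,d) \<in> Cbar" and p: "curve_to_D (s,u,d) = p"
      using Dvar_in_curve_image by blast
    obtain S U D where lim: "(S \<longlongrightarrow> s) (at 0)" "(U \<longlongrightarrow> u) (at 0)" "(D \<longlongrightarrow> d) (at 0)"
      and ev: "\<forall>\<^sub>F e in at (0::complex). (S e, U e, D e) \<in> Cbar \<and> S e \<noteq> U e \<and> S e \<noteq> 1 \<and> U e \<noteq> 1"
      using Cbar_approx[OF C] by blast
    have "\<forall>\<^sub>F e in at 0. curve_to_D (S e, U e, D e) \<in> {p \<in> Dvar. exceptional_D p \<noteq> 0}"
      using ev by (rule eventually_mono) (use generic_curve_point(1) in blast)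
    then show "\<exists>f. (\<forall>i<12. ((\<lambda>e. f e ! i) \<longlongrightarrow> p ! i) (at (0::complex))) \<and>
        (\<forall>\<^sub>F e in at 0. f e \<in> {p \<in> Dvar. exceptional_D p \<noteq> 0})"
      using curve_to_D_tendsto[OF lim C] \<open>p \<in> Dvar\<close> p by auto
  qed
  then show ?thesis
    using Dvar_subset_torus subset_zclosure[of Dvar 12] zclosure_mono_vanishing by blast
qed

lemma E0bar_dense: "E0bar \<subseteq> zclosure 4 {q \<in> E0bar. exceptional_E q \<noteq> 0}"
proof -
  have "vanishing_polys 4 {q \<in> E0bar. exceptional_E q \<noteq> 0} \<subseteq> vanishing_polys 4 (ebar ` Cbar)"
  proof (rule vanishing_polys_subset_if_limits[OF at_neq_bot])
    fix q assume "q \<in> ebar ` Cbar"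
    then obtain s u d where C: "(s,u,d) \<in> Cbar" and q: "q = ebar (s,u,d)"
      by auto
    then have s0: "s \<noteq> 0" "u \<noteq> 0" by (auto simp: mem_Cbar_iff)
    obtain S U D where lim: "(S \<longlongrightarrow> s) (at 0)" "(U \<longlongrightarrow> u) (at 0)" "(D \<longlongrightarrow> d) (at 0)"
      and ev: "\<forall>\<^sub>F e in at (0::complex). (S e, U e, D e) \<in> Cbar \<and> S e \<noteq> U e \<and> S e \<noteq> 1 \<and> U e \<noteq> 1"
      using Cbar_approx[OF C] by blast
    have "\<forall>\<^sub>F e in at 0. ebar (S e, U e, D e) \<in> {q \<in> E0bar. exceptional_E q \<noteq> 0}"
      using ev by (rule eventually_mono) (use generic_curve_point(2) in blast)
    then show "\<exists>f. (\<forall>i<4. ((\<lambda>e. f e ! i) \<longlongrightarrow> q ! i) (at (0::complex))) \<and>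
        (\<forall>\<^sub>F e in at 0. f e \<in> {q \<in> E0bar. exceptional_E q \<noteq> 0})"
      using ebar_tendsto[OF lim s0] q by auto
  qed
  then show ?thesis
    unfolding E0bar_def by (rule zclosure_mono_vanishing)
qed

lemma Psi_inv_Psi:
  assumes "p \<in> {p \<in> Dvar. exceptional_D p \<noteq> 0}"
  shows "Psi_inv (Psi p) = p"
proof -
  obtain s u d where C: "(s,u,d) \<in> Cbar" and Psi: "Psi p = ebar (s,u,d)"
    and p: "curve_to_D (s,u,d) = p"
    using assms Dvar_in_curve_image by blast
  have "p!6 \<noteq> 0" using assms Dvar_subset_torus by (auto simp: torus_def)
  then have "s \<noteq> u"
    using assms by (auto simp: exceptional_D_eq Psi exceptional_E_ebar)
  then show ?thesis
    using C Psi_inv_ebar p by (simp add: Psi mem_Cbar_iff)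
qed

lemma Psi_Psi_inv:
  assumes "q \<in> {q \<in> E0bar. exceptional_E q \<noteq> 0}"
  shows "Psi_inv q \<in> {p \<in> Dvar. exceptional_D p \<noteq> 0}" and "Psi (Psi_inv q) = q"
proof -
  have nz: "q!0 \<noteq> q!2" "q!0 \<noteq> 1" "q!2 \<noteq> 1"
    using assms by (auto simp: exceptional_E_def)
  then obtain d where C: "(q!0, q!2, d) \<in> Cbar" and q: "q = ebar (q!0, q!2, d)"
    using assms E0bar_in_curve_image by blast
  have "Psi_inv q = curve_to_D (q!0, q!2, d)"
    using C nz(1) Psi_inv_ebar q by (metis mem_Cbar_iff)
  then show "Psi_inv q \<in> {p \<in> Dvar. exceptional_D p \<noteq> 0}" "Psi (Psi_inv q) = q"
    using generic_curve_point(1)[OF C nz] curve_to_D_in_Dvar(2)[OF C nz(2,3)] q by simp_all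
qed

lemma rational_on_Psi: "A \<subseteq> torus 12 \<Longrightarrow> rational_on 12 4 A Psi"
  unfolding Psi_def[abs_def]
  by (intro rational_on_Cons rational_on_Nil rational_fun_divide rational_fun_mult rational_fun_var)
    (auto simp: rational_on_Nil torus_def)

lemma rational_on_Psi_inv: "rational_on 4 12 {q \<in> E0bar. exceptional_E q \<noteq> 0} Psi_inv"
proof -
  define Y where "Y q = (q!0*q!1 - q!2*q!3) / (q!0 - q!2)" for q :: "complex list"
  let ?V = "{q \<in> E0bar. exceptional_E q \<noteq> 0}"
  have "D_params (q!3 / Y q) (q!1 / Y q) (Y q) (Y q / (q!1 * q!3)) \<and> q!0 - q!2 \<noteq> 0"
    if "q \<in> ?V" for q
    using Psi_Psi_inv(1)[OF that] that
    by (auto simp: Psi_inv_def lift_shapes_def shape_point_in_Dvar_iff Y_def exceptional_E_def)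
  then have nz: "\<forall>q\<in>?V. q!3 / Y q \<notin> {0,1} \<and> q!1 / Y q \<notin> {0,1} \<and> Y q \<notin> {0,1} \<and>
      Y q / (q!1 * q!3) \<notin> {0,1} \<and> Y q \<noteq> 0 \<and> q!1 * q!3 \<noteq> 0 \<and> q!0 - q!2 \<noteq> 0"
    by (auto simp: D_params_def)
  have "rational_fun 4 ?V Y"
    unfolding Y_def using nz
    by (intro rational_fun_divide rational_fun_diff rational_fun_mult rational_fun_var) auto
  then have "rational_on 4 12 ?V
      (\<lambda>q. shape_point (q!3 / Y q) (q!1 / Y q) (Y q) (Y q / (q!1 * q!3)))"
    using nz
    by (intro rational_on_shape_point rational_fun_divide rational_fun_mult rational_fun_var) auto
  then show ?thesis
    by (simp add: Psi_inv_def[abs_def] lift_shapes_def Y_def)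
qed

theorem mainTheorem4:
  shows "birational_iso 12 Dvar 4 E0bar Psi"
  unfolding birational_iso_def
proof (intro conjI exI)
  let ?U = "{p \<in> Dvar. exceptional_D p \<noteq> 0}" and ?V = "{q \<in> E0bar. exceptional_E q \<noteq> 0}"
  show "Psi ` Dvar \<subseteq> E0bar" by (rule Psi_Dvar_subset)
  show "open_dense_in 12 ?U Dvar"
    by (rule open_dense_in_nonvanishing[OF poly_fun_exceptional_D Dvar_subset_torus Dvar_dense])
  show "open_dense_in 4 ?V E0bar"
    by (rule open_dense_in_nonvanishing[OF poly_fun_exceptional_E _ E0bar_dense])
      (simp add: E0bar_def zclosure_subset_torus)
  show "\<forall>p\<in>?U. Psi_inv (Psi p) = p" and "\<forall>q\<in>?V. Psi (Psi_inv q) = q"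
    using Psi_inv_Psi Psi_Psi_inv(2) by blast+
  then show "bij_betw Psi ?U ?V"
    using Psi_image_generic Psi_Psi_inv(1) by (intro bij_betw_byWitness[where f' = Psi_inv]) auto
  show "rational_on 12 4 ?U Psi"
    using Dvar_subset_torus by (intro rational_on_Psi) auto
  show "rational_on 4 12 ?V Psi_inv"
    by (rule rational_on_Psi_inv)
qed

end
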